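(* Suppose $x\in X\subseteq\{1,\dots,n\}$ and $\delta$ is invertible in $R$. Then the left $\mathcal P_n$-module $\mathcal A_{X,x}$ is a direct summand of $\mathcal P_n/J_{X-\{x\}}$.
   Context: $R$ is a commutative ring, $\delta\in R$, and $\mathcal P_n=\mathcal P_n(R,\delta)$ is the partition algebra: the free $R$-module on set partitions ("diagrams") of $\{-n,\dots,-1,1,\dots,n\}$ (negative = left nodes, positive = right nodes), with product by stacking, taking the induced partition on outer nodes, and multiplying by $\delta$ for each component consisting only of middle nodes. For $Z\subseteq\{1,\dots,n\}$, $J_Z$ is the left ideal spanned by diagrams in which among the right nodes labelled by $Z$ there is a singleton block or two distinct nodes in the same block. $A_x$ is the left submodule spanned by diagrams in which the right node $x$ is a singleton, and $\mathcal A_{X,x}=A_x/(A_x\cap J_{X-\{x\}})$, a submodule of $\mathcal P_n/J_{X-\{x\}}$. *)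

theory Defs
  imports Main "HOL-Library.Disjoint_Sets"
begin

text \<open>Nodes of a partition diagram on n+n nodes: left nodes -n..-1, right nodes 1..n.\<close>
definition nodes :: "nat \<Rightarrow> int set" where
  "nodes n = {- int n .. -1} \<union> {1 .. int n}"

definition diagrams :: "nat \<Rightarrow> int set set set" where
  "diagrams n = {d. partition_on (nodes n) d}"

text \<open>Stacking d1 (left) against d2 (right): right nodes of d1 are glued to the
  left nodes of d2.  Vertices are tagged: (i,0) left outer nodes (i<0),
  (i,1) middle nodes (i>0), (i,2) right outer nodes (i>0).\<close>
definition tag1 :: "int set \<Rightarrow> (int \<times> nat) set" where
  "tag1 B = (\<lambda>i. if i < 0 then (i, 0) else (i, 1)) ` B"

definition tag2 :: "int set \<Rightarrow> (int \<times> nat) set" where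
  "tag2 B = (\<lambda>i. if i < 0 then (- i, 1) else (i, 2)) ` B"

definition stack :: "int set set \<Rightarrow> int set set \<Rightarrow> (int \<times> nat) set set" where
  "stack d1 d2 = tag1 ` d1 \<union> tag2 ` d2"

definition same_block :: "'a set set \<Rightarrow> ('a \<times> 'a) set" where
  "same_block S = {(u, v). \<exists>B\<in>S. u \<in> B \<and> v \<in> B}"

definition components :: "'a set set \<Rightarrow> 'a set set" where
  "components S = (\<Union>S) // ((same_block S)\<^sup>*)"

definition outer :: "int \<times> nat \<Rightarrow> bool" where
  "outer u \<longleftrightarrow> snd u \<noteq> 1"

definition compose :: "int set set \<Rightarrow> int set set \<Rightarrow> int set set" where
  "compose d1 d2 =
     {fst ` (C \<inter> Collect outer) | C. C \<in> components (stack d1 d2) \<and> (\<exists>u\<in>C. outer u)}"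

definition nmid :: "int set set \<Rightarrow> int set set \<Rightarrow> nat" where
  "nmid d1 d2 = card {C \<in> components (stack d1 d2). \<forall>u\<in>C. \<not> outer u}"

text \<open>The partition algebra P_n(R,delta): R-valued functions on the finite set of
  diagrams (free R-module on diagrams), with the stacking product.\<close>
definition Pn :: "nat \<Rightarrow> (int set set \<Rightarrow> 'r::comm_ring_1) set" where
  "Pn n = {f. \<forall>d. d \<notin> diagrams n \<longrightarrow> f d = 0}"

definition pmult :: "'r::comm_ring_1 \<Rightarrow> nat \<Rightarrow> (int set set \<Rightarrow> 'r) \<Rightarrow> (int set set \<Rightarrow> 'r)
                      \<Rightarrow> (int set set \<Rightarrow> 'r)" where
  "pmult \<delta> n f g = (\<lambda>e. \<Sum>(d1, d2) \<in> {(d1, d2). d1 \<in> diagrams n \<and> d2 \<in> diagrams n \<and> compose d1 d2 = e}.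
                         f d1 * g d2 * \<delta> ^ nmid d1 d2)"

definition span_diag :: "nat \<Rightarrow> (int set set \<Rightarrow> bool) \<Rightarrow> (int set set \<Rightarrow> 'r::comm_ring_1) set" where
  "span_diag n S = {f \<in> Pn n. \<forall>d. f d \<noteq> 0 \<longrightarrow> S d}"

definition J_ideal :: "nat \<Rightarrow> nat set \<Rightarrow> (int set set \<Rightarrow> 'r::comm_ring_1) set" where
  "J_ideal n Z = span_diag n (\<lambda>d. \<exists>B\<in>d. (\<exists>z\<in>Z. B = {int z}) \<or>
                                    (\<exists>z1\<in>Z. \<exists>z2\<in>Z. z1 \<noteq> z2 \<and> int z1 \<in> B \<and> int z2 \<in> B))"

definition A_mod :: "nat \<Rightarrow> nat \<Rightarrow> (int set set \<Rightarrow> 'r::comm_ring_1) set" where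
  "A_mod n x = span_diag n (\<lambda>d. {int x} \<in> d)"

text \<open>Cosets v + J, i.e. elements of the quotient module P_n / J.\<close>
definition coset :: "(int set set \<Rightarrow> 'r::comm_ring_1) set \<Rightarrow> (int set set \<Rightarrow> 'r) \<Rightarrow> (int set set \<Rightarrow> 'r) set" where
  "coset J v = {w. \<exists>j\<in>J. w = (\<lambda>d. v d + j d)}"

definition quot_submodule :: "'r::comm_ring_1 \<Rightarrow> nat \<Rightarrow> (int set set \<Rightarrow> 'r) set
      \<Rightarrow> (int set set \<Rightarrow> 'r) set set \<Rightarrow> bool" where
  "quot_submodule \<delta> n J N \<longleftrightarrow>
     N \<subseteq> coset J ` Pn n \<and>
     coset J (\<lambda>_. 0) \<in> N \<and>
     (\<forall>u\<in>Pn n. \<forall>v\<in>Pn n. coset J u \<in> N \<longrightarrow> coset J v \<in> N \<longrightarrow> coset J (\<lambda>d. u d + v d) \<in> N) \<and>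
     (\<forall>r. \<forall>v\<in>Pn n. coset J v \<in> N \<longrightarrow> coset J (\<lambda>d. r * v d) \<in> N) \<and>
     (\<forall>p\<in>Pn n. \<forall>v\<in>Pn n. coset J v \<in> N \<longrightarrow> coset J (pmult \<delta> n p v) \<in> N)"

definition direct_summand_quot :: "'r::comm_ring_1 \<Rightarrow> nat \<Rightarrow> (int set set \<Rightarrow> 'r) set
      \<Rightarrow> (int set set \<Rightarrow> 'r) set set \<Rightarrow> bool" where
  "direct_summand_quot \<delta> n J M \<longleftrightarrow>
     (\<exists>N. quot_submodule \<delta> n J N \<and>
          M \<inter> N = {coset J (\<lambda>_. 0)} \<and>
          (\<forall>v\<in>Pn n. \<exists>a\<in>Pn n. \<exists>c\<in>Pn n. coset J a \<in> M \<and> coset J c \<in> N \<and>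
                       coset J v = coset J (\<lambda>d. a d + c d)))"

end

theory Submission
  imports Defs
begin

text \<open>Let \<open>u\<close> be the inverse of \<open>\<delta>\<close>. For a diagram \<open>d\<close> let \<open>d'\<close> be obtained by cutting the
  right node \<open>x\<close> out of its block, so that \<open>{x}\<close> becomes a block, and put \<open>T d = d'\<close> if
  \<open>{x}\<close> is already a block of \<open>d\<close> and \<open>T d = u d'\<close> otherwise. Then \<open>T\<close> is a projection of
  \<open>P\<^sub>n\<close> onto \<open>A\<^sub>x\<close>. It commutes with left multiplication: cutting \<open>x\<close> out commutes with
  stacking a diagram on the left, and it closes off one new component of middle nodes exactly
  when \<open>{x}\<close> is not a block of \<open>d\<close> but is a block of the product, which the factor \<open>u\<close>
  cancels. As \<open>x \<notin> X - {x}\<close>, cutting \<open>x\<close> out neither destroys a singleton block nor separates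
  two nodes of \<open>X - {x}\<close>, so \<open>T\<close> preserves \<open>J\<^bsub>X-{x}\<^esub>\<close>. Hence \<open>T\<close> induces an idempotent
  endomorphism of \<open>P\<^sub>n/J\<^bsub>X-{x}\<^esub>\<close> with image \<open>\<A>\<^bsub>X,x\<^esub>\<close>, whose kernel is a complement.\<close>

section \<open>Connected components and isolated points\<close>

lemma same_blockI: "B \<in> S \<Longrightarrow> a \<in> B \<Longrightarrow> b \<in> B \<Longrightarrow> (a, b) \<in> same_block S"
  unfolding same_block_def by blast

lemma same_blockE:
  assumes "(a, b) \<in> same_block S"
  obtains B where "B \<in> S" "a \<in> B" "b \<in> B"
  using assms unfolding same_block_def by blast

lemma sym_rtrancl_same_block: "sym ((same_block S)\<^sup>*)"
  by (rule sym_rtrancl) (auto simp: sym_def same_block_def)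

lemma rtrancl_same_block_in_Union:
  "(a, b) \<in> (same_block S)\<^sup>* \<Longrightarrow> a \<in> \<Union>S \<Longrightarrow> b \<in> \<Union>S"
  by (induction rule: rtrancl_induct) (auto elim: same_blockE)

lemma Image_in_components: "a \<in> \<Union>S \<Longrightarrow> (same_block S)\<^sup>* `` {a} \<in> components S"
  unfolding components_def by (rule quotientI)

lemma componentsE:
  assumes "K \<in> components S"
  obtains a where "a \<in> \<Union>S" "K = (same_block S)\<^sup>* `` {a}"
  using assms unfolding components_def by (rule quotientE)

lemma components_eq_Image:
  assumes "K \<in> components S" "a \<in> K"
  shows "K = (same_block S)\<^sup>* `` {a}"
proof -
  obtain c where "K = (same_block S)\<^sup>* `` {c}" using assms(1) by (rule componentsE)
  with assms(2) sym_rtrancl_same_block[of S] show ?thesis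
    by (auto dest: symD intro: rtrancl_trans)
qed

lemma partition_on_components: "partition_on (\<Union>S) (components S)"
proof (rule partition_onI)
  show "\<Union>(components S) = \<Union>S"
    by (auto elim!: componentsE dest: rtrancl_same_block_in_Union
        intro!: Image_in_components[THEN UnionI])
next
  fix K K' assume "K \<in> components S" "K' \<in> components S" "K \<noteq> K'"
  then show "disjnt K K'"
    by (metis components_eq_Image disjnt_iff)
next
  show "{} \<notin> components S" by (auto elim: componentsE)
qed

lemma Union_components [simp]: "\<Union>(components S) = \<Union>S"
  using partition_onD1[OF partition_on_components, of S] by (rule sym)

lemma partition_on_eq_if_common:
  "partition_on A P \<Longrightarrow> p \<in> P \<Longrightarrow> q \<in> P \<Longrightarrow> x \<in> p \<Longrightarrow> x \<in> q \<Longrightarrow> p = q"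
  unfolding partition_on_def disjoint_def by blast

definition isolate :: "'a \<Rightarrow> 'a set set \<Rightarrow> 'a set set" where
  "isolate u S = insert {u} ((\<lambda>C. C - {u}) ` S - {{}})"

lemma mem_isolate_iff: "C' \<in> isolate u S \<longleftrightarrow> C' = {u} \<or> (\<exists>C\<in>S. C' = C - {u} \<and> C' \<noteq> {})"
  unfolding isolate_def by blast

lemma singleton_in_isolate [simp]: "{u} \<in> isolate u S"
  unfolding isolate_def by blast

lemma Diff_in_isolate: "C \<in> S \<Longrightarrow> C - {u} \<noteq> {} \<Longrightarrow> C - {u} \<in> isolate u S"
  unfolding isolate_def by blast

lemma Union_isolate: "u \<in> \<Union>S \<Longrightarrow> \<Union>(isolate u S) = \<Union>S"
  unfolding isolate_def by blast

lemma isolate_eq_self: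
  assumes P: "partition_on A P" and u: "{u} \<in> P"
  shows "isolate u P = P"
proof -
  have keep: "C - {u} = C" if "C \<in> P" "C \<noteq> {u}" for C
    using partition_on_eq_if_common[OF P that(1) u] that by blast
  have "{} \<notin> P" using P by (rule partition_onD3)
  show ?thesis
  proof (rule set_eqI)
    fix C'
    show "C' \<in> isolate u P \<longleftrightarrow> C' \<in> P"
      unfolding mem_isolate_iff using u keep \<open>{} \<notin> P\<close> by (metis Diff_cancel)
  qed
qed

lemma partition_on_isolate:
  assumes "partition_on A P" "u \<in> A"
  shows "partition_on A (isolate u P)"
proof (rule partition_onI)
  show "\<Union>(isolate u P) = A"
    using assms by (simp add: Union_isolate partition_on_def)
  show "disjnt p q" if "p \<in> isolate u P" "q \<in> isolate u P" "p \<noteq> q" for p q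
    using that disjointD[OF partition_onD2[OF assms(1)]] unfolding mem_isolate_iff disjnt_def
    by (elim disjE bexE conjE) auto
  show "{} \<notin> isolate u P"
    unfolding isolate_def by blast
qed

lemma same_block_isolate_subset: "same_block (isolate u S) \<subseteq> (same_block S)\<^sup>="
  unfolding same_block_def isolate_def by blast

lemma rtrancl_same_block_isolate_from_isolated:
  "(u, b) \<in> (same_block (isolate u S))\<^sup>* \<Longrightarrow> b = u"
  by (induction rule: rtrancl_induct) (auto elim!: same_blockE simp: mem_isolate_iff)

lemma rtrancl_same_block_isolate:
  assumes B: "B \<in> S" "u \<in> B" and unique: "\<And>B'. B' \<in> S \<Longrightarrow> u \<in> B' \<Longrightarrow> B' = B"
    and ab: "(a, b) \<in> (same_block S)\<^sup>*" and "a \<noteq> u" "b \<noteq> u"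
  shows "(a, b) \<in> (same_block (isolate u S))\<^sup>*"
proof -
  let ?R' = "(same_block (isolate u S))\<^sup>*"
  have extend: "(a, z) \<in> ?R'" if "(a, y) \<in> ?R'" "y \<in> C" "z \<in> C" "C \<in> S" "y \<noteq> u" "z \<noteq> u" for y z C
  proof -
    have "C - {u} \<in> isolate u S" using that by (intro Diff_in_isolate) auto
    then have "(y, z) \<in> same_block (isolate u S)" using that by (auto intro: same_blockI)
    with that(1) show ?thesis by (rule rtrancl_into_rtrancl)
  qed
  \<comment> \<open>A path through \<open>u\<close> enters and leaves \<open>u\<close> inside \<open>B\<close>, so it can be rerouted through \<open>B - {u}\<close>.\<close>
  have "if b = u then \<exists>c\<in>B - {u}. (a, c) \<in> ?R' else (a, b) \<in> ?R'"
    using ab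
  proof (induction rule: rtrancl_induct)
    case base
    then show ?case using \<open>a \<noteq> u\<close> by simp
  next
    case (step y z)
    then obtain C where C: "C \<in> S" "y \<in> C" "z \<in> C" by (auto elim: same_blockE)
    show ?case
    proof (cases "y = u \<or> z = u")
      case True
      then have "C = B" using C unique by blast
      with step.IH C B extend[where z = z and C = B] show ?thesis by (auto split: if_splits)
    next
      case False
      with step.IH C extend show ?thesis by auto
    qed
  qed
  with \<open>b \<noteq> u\<close> show ?thesis by simp
qed

lemma Image_rtrancl_same_block_isolate:
  assumes B: "B \<in> S" "u \<in> B" and unique: "\<And>B'. B' \<in> S \<Longrightarrow> u \<in> B' \<Longrightarrow> B' = B"
  shows "(same_block (isolate u S))\<^sup>* `` {a} =
           (if a = u then {u} else (same_block S)\<^sup>* `` {a} - {u})"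
proof (cases "a = u")
  case True
  then show ?thesis using rtrancl_same_block_isolate_from_isolated by auto
next
  case False
  let ?R = "(same_block S)\<^sup>*" and ?R' = "(same_block (isolate u S))\<^sup>*"
  have "?R' \<subseteq> ?R"
    using rtrancl_mono[OF same_block_isolate_subset] by simp
  moreover have "(a, u) \<notin> ?R'"
    using False sym_rtrancl_same_block rtrancl_same_block_isolate_from_isolated
    by (metis symD)
  ultimately show ?thesis
    using False rtrancl_same_block_isolate[OF B unique, of a] by auto
qed

lemma components_isolate:
  assumes B: "B \<in> S" "u \<in> B" and unique: "\<And>B'. B' \<in> S \<Longrightarrow> u \<in> B' \<Longrightarrow> B' = B"
  shows "components (isolate u S) = isolate u (components S)"
proof -
  let ?R = "(same_block S)\<^sup>*"
  let ?R' = "(same_block (isolate u S))\<^sup>*"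
  have u: "u \<in> \<Union>S" using B by blast
  have "components (isolate u S) = (\<lambda>a. ?R' `` {a}) ` insert u (\<Union>S - {u})"
    unfolding components_def quotient_def Union_isolate[OF u] insert_Diff[OF u] by blast
  also have "\<dots> = insert {u} ((\<lambda>a. ?R `` {a} - {u}) ` (\<Union>S - {u}))"
    by (auto simp: Image_rtrancl_same_block_isolate[OF B unique] cong: image_cong)
  also have "(\<lambda>a. ?R `` {a} - {u}) ` (\<Union>S - {u}) = (\<lambda>C. C - {u}) ` components S - {{}}"
  proof -
    have "?R `` {a} - {u} \<in> (\<lambda>a. ?R `` {a} - {u}) ` (\<Union>S - {u})"
      if "a \<in> \<Union>S" "b \<in> ?R `` {a}" "b \<noteq> u" for a b
      using that components_eq_Image[OF Image_in_components[OF that(1)] that(2)]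
        rtrancl_same_block_in_Union[of a b S] by auto
    then show ?thesis
      unfolding components_def quotient_def by blast
  qed
  finally show ?thesis unfolding isolate_def .
qed

section \<open>Outer blocks and closed middle components\<close>

definition outer_blocks :: "(int \<times> nat) set set \<Rightarrow> int set set" where
  "outer_blocks Cs = {fst ` (C \<inter> Collect outer) | C. C \<in> Cs \<and> (\<exists>u\<in>C. outer u)}"

definition middle_components :: "(int \<times> nat) set set \<Rightarrow> (int \<times> nat) set set" where
  "middle_components Cs = {C \<in> Cs. \<forall>u\<in>C. \<not> outer u}"

lemma compose_eq_outer_blocks: "compose d1 d2 = outer_blocks (components (stack d1 d2))"
  unfolding compose_def outer_blocks_def ..

lemma nmid_eq_card_middle_components:
  "nmid d1 d2 = card (middle_components (components (stack d1 d2)))"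
  unfolding nmid_def middle_components_def ..

lemma outer_blocksI:
  "C \<in> Cs \<Longrightarrow> u \<in> C \<Longrightarrow> outer u \<Longrightarrow> fst ` (C \<inter> Collect outer) \<in> outer_blocks Cs"
  unfolding outer_blocks_def by blast

lemma partition_on_outer_blocks:
  assumes "partition_on V Cs" and "inj_on fst (V \<inter> Collect outer)"
  shows "partition_on (fst ` (V \<inter> Collect outer)) (outer_blocks Cs)"
proof -
  have "partition_on (fst ` (Collect outer \<inter> V))
          ((`) fst ` ((\<inter>) (Collect outer) ` Cs - {{}}) - {{}})"
    using assms(2)
    by (intro partition_on_inj_image[OF partition_on_restrict[OF assms(1)]]) (simp add: Int_commute)
  moreover have "(`) fst ` ((\<inter>) (Collect outer) ` Cs - {{}}) - {{}} = outer_blocks Cs"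
    unfolding outer_blocks_def by (auto simp: Int_commute)
  ultimately show ?thesis by (simp add: Int_commute)
qed

lemma outer_blocks_eq_image:
  "outer_blocks Cs = (\<lambda>C. fst ` (C \<inter> Collect outer)) ` {C \<in> Cs. \<exists>u\<in>C. outer u}"
  unfolding outer_blocks_def by blast

lemma outer_blocks_isolate:
  assumes inj: "inj_on fst (\<Union>Cs \<inter> Collect outer)" and ux: "ux \<in> \<Union>Cs" "outer ux"
  shows "outer_blocks (isolate ux Cs) = isolate (fst ux) (outer_blocks Cs)"
proof -
  let ?h = "\<lambda>C. fst ` (C \<inter> Collect outer)"
  let ?Cs' = "{C \<in> Cs. \<exists>u\<in>C - {ux}. outer u}"
  have remove: "?h (C - {ux}) = ?h C - {fst ux}" if "C \<in> Cs" for C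
  proof -
    have "(C - {ux}) \<inter> Collect outer = C \<inter> Collect outer - {ux}" by blast
    then show ?thesis
      using inj_on_image_set_diff[OF inj, of "C \<inter> Collect outer" "{ux}"] that ux by auto
  qed
  have "{C' \<in> isolate ux Cs. \<exists>u\<in>C'. outer u} = insert {ux} ((\<lambda>C. C - {ux}) ` ?Cs')"
    using ux(2) unfolding isolate_def by blast
  moreover have "?h {ux} = {fst ux}" using ux(2) by auto
  moreover have "(\<lambda>C. ?h (C - {ux})) ` ?Cs' = (\<lambda>C. ?h C - {fst ux}) ` ?Cs'"
    using remove by (intro image_cong) simp_all
  ultimately have "outer_blocks (isolate ux Cs) = insert {fst ux} ((\<lambda>C. ?h C - {fst ux}) ` ?Cs')"
    unfolding outer_blocks_eq_image by (simp add: image_image)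
  also have "(\<lambda>C. ?h C - {fst ux}) ` ?Cs' =
      (\<lambda>C. ?h C - {fst ux}) ` {C \<in> Cs. \<exists>u\<in>C. outer u} - {{}}"
  proof -
    have "?h C - {fst ux} \<noteq> {} \<longleftrightarrow> (\<exists>u\<in>C - {ux}. outer u)" if "C \<in> Cs" for C
      unfolding remove[OF that, symmetric] by blast
    then show ?thesis by blast
  qed
  finally show ?thesis
    unfolding isolate_def outer_blocks_eq_image by (simp add: image_image)
qed

lemma singleton_in_outer_blocks_iff:
  assumes P: "partition_on V Cs" and inj: "inj_on fst (V \<inter> Collect outer)"
    and K: "K \<in> Cs" "ux \<in> K" and ux: "outer ux"
  shows "{fst ux} \<in> outer_blocks Cs \<longleftrightarrow> (\<forall>v\<in>K - {ux}. \<not> outer v)"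
proof
  have same_ux: "v = ux" if "v \<in> C" "C \<in> Cs" "outer v" "fst v = fst ux" for v C
  proof (rule inj_onD[OF inj \<open>fst v = fst ux\<close>])
    show "v \<in> V \<inter> Collect outer" "ux \<in> V \<inter> Collect outer"
      using that K ux partition_onD1[OF P] by auto
  qed
  assume "{fst ux} \<in> outer_blocks Cs"
  then obtain C where C: "C \<in> Cs" "fst ` (C \<inter> Collect outer) = {fst ux}"
    unfolding outer_blocks_def by auto
  then have "fst ux \<in> fst ` (C \<inter> Collect outer)" by simp
  then obtain w where w: "w \<in> C" "outer w" "fst w = fst ux" by auto
  then have "C = K"
    using partition_on_eq_if_common[OF P C(1) K(1)] same_ux[OF w(1) C(1) w(2,3)] K(2) by simp
  show "\<forall>v\<in>K - {ux}. \<not> outer v"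
  proof (intro ballI notI)
    fix v assume v: "v \<in> K - {ux}" "outer v"
    then have "fst v \<in> fst ` (C \<inter> Collect outer)" using \<open>C = K\<close> by blast
    then have "fst v = fst ux" using C(2) by simp
    then have "v = ux" using same_ux[OF _ K(1) v(2)] v(1) by simp
    with v(1) show False by simp
  qed
next
  assume "\<forall>v\<in>K - {ux}. \<not> outer v"
  then have "K \<inter> Collect outer = {ux}" using K(2) ux by auto
  then show "{fst ux} \<in> outer_blocks Cs"
    using outer_blocksI[OF K ux] by simp
qed

lemma middle_components_isolate:
  assumes P: "partition_on V Cs" and K: "K \<in> Cs" "ux \<in> K" "K \<noteq> {ux}" and ux: "outer ux"
  shows "middle_components (isolate ux Cs) =
      (if \<forall>v\<in>K - {ux}. \<not> outer v then insert (K - {ux}) (middle_components Cs)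
       else middle_components Cs)" (is "?lhs = ?rhs")
proof (rule set_eqI)
  have "{} \<notin> Cs" using P by (rule partition_onD3)
  fix C'
  show "C' \<in> ?lhs \<longleftrightarrow> C' \<in> ?rhs"
  proof
    assume "C' \<in> ?lhs"
    then obtain C where C: "C \<in> Cs" "C' = C - {ux}" "\<forall>v\<in>C'. \<not> outer v"
      using ux unfolding middle_components_def isolate_def by auto
    show "C' \<in> ?rhs"
    proof (cases "ux \<in> C")
      case True
      then have "C = K" using partition_on_eq_if_common[OF P C(1) K(1) _ K(2)] by simp
      with C show ?thesis by simp
    next
      case False
      with C show ?thesis unfolding middle_components_def by auto
    qed
  next
    assume "C' \<in> ?rhs"
    then consider "C' = K - {ux}" "\<forall>v\<in>K - {ux}. \<not> outer v" | "C' \<in> middle_components Cs"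
      by (auto split: if_splits)
    then show "C' \<in> ?lhs"
    proof cases
      case 1
      have "K - {ux} \<in> isolate ux Cs" using K by (intro Diff_in_isolate) auto
      with 1 show ?thesis unfolding middle_components_def by simp
    next
      case 2
      then have "C' \<in> Cs" "C' - {ux} = C'" "C' \<noteq> {}"
        using ux \<open>{} \<notin> Cs\<close> unfolding middle_components_def by auto
      then have "C' \<in> isolate ux Cs" by (metis Diff_in_isolate)
      with 2 show ?thesis unfolding middle_components_def by simp
    qed
  qed
qed

lemma card_middle_components_isolate:
  assumes "finite Cs" and P: "partition_on V Cs" and inj: "inj_on fst (V \<inter> Collect outer)"
    and K: "K \<in> Cs" "ux \<in> K" "K \<noteq> {ux}" and ux: "outer ux"
  shows "card (middle_components (isolate ux Cs)) =
           card (middle_components Cs) + (if {fst ux} \<in> outer_blocks Cs then 1 else 0)"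
proof -
  have "K - {ux} \<notin> Cs"
  proof
    assume "K - {ux} \<in> Cs"
    moreover obtain v where "v \<in> K - {ux}" using K by blast
    ultimately have "K - {ux} = K" using partition_on_eq_if_common[OF P _ K(1)] by blast
    then show False using K(2) by blast
  qed
  then have "K - {ux} \<notin> middle_components Cs" unfolding middle_components_def by blast
  moreover have "finite (middle_components Cs)"
    using \<open>finite Cs\<close> unfolding middle_components_def by simp
  ultimately show ?thesis
    unfolding middle_components_isolate[OF P K ux] singleton_in_outer_blocks_iff[OF P inj K(1,2) ux]
    by simp
qed

section \<open>Stacking and composing diagrams\<close>

definition vertex1 :: "int \<Rightarrow> int \<times> nat" where
  "vertex1 i = (if i < 0 then (i, 0) else (i, 1))"

definition vertex2 :: "int \<Rightarrow> int \<times> nat" where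
  "vertex2 i = (if i < 0 then (- i, 1) else (i, 2))"

lemma tag1_eq_image: "tag1 B = vertex1 ` B"
  unfolding tag1_def vertex1_def ..

lemma tag2_eq_image: "tag2 B = vertex2 ` B"
  unfolding tag2_def vertex2_def ..

lemma inj_vertex2: "inj vertex2"
  unfolding inj_def vertex2_def by (auto split: if_splits)

lemma vertex2_pos: "i > 0 \<Longrightarrow> vertex2 i = (i, 2)"
  by (simp add: vertex2_def)

lemma Union_stack: "\<Union>(stack d1 d2) = vertex1 ` \<Union>d1 \<union> vertex2 ` \<Union>d2"
  unfolding stack_def tag1_eq_image tag2_eq_image by blast

lemma inj_on_fst_outer_vertices: "inj_on fst ((vertex1 ` A \<union> vertex2 ` B) \<inter> Collect outer)"
  unfolding inj_on_def vertex1_def vertex2_def outer_def by auto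

lemma inj_on_fst_outer_stack: "inj_on fst (\<Union>(stack d1 d2) \<inter> Collect outer)"
  unfolding Union_stack by (rule inj_on_fst_outer_vertices)

lemma fst_outer_vertices: "fst ` ((vertex1 ` A \<union> vertex2 ` A) \<inter> Collect outer) = A"
proof -
  have "i \<in> fst ` ((vertex1 ` A \<union> vertex2 ` A) \<inter> Collect outer)" if "i \<in> A" for i
    using that by (cases "i < 0") (force simp: vertex1_def vertex2_def outer_def)+
  then show ?thesis
    by (auto simp: vertex1_def vertex2_def outer_def split: if_splits)
qed

lemma diagrams_iff: "d \<in> diagrams n \<longleftrightarrow> partition_on (nodes n) d"
  unfolding diagrams_def by simp

lemma finite_diagrams: "finite (diagrams n)"
  unfolding diagrams_def nodes_def by (rule finitely_many_partition_on) simp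

lemma compose_in_diagrams:
  assumes "d1 \<in> diagrams n" "d2 \<in> diagrams n"
  shows "compose d1 d2 \<in> diagrams n"
proof -
  have U: "\<Union>(stack d1 d2) = vertex1 ` nodes n \<union> vertex2 ` nodes n"
    using assms by (simp add: Union_stack diagrams_iff partition_on_def)
  have "partition_on (fst ` (\<Union>(stack d1 d2) \<inter> Collect outer))
          (outer_blocks (components (stack d1 d2)))"
    by (rule partition_on_outer_blocks[OF partition_on_components inj_on_fst_outer_stack])
  then show ?thesis
    by (simp add: U diagrams_iff fst_outer_vertices compose_eq_outer_blocks)
qed

lemma isolate_in_diagrams: "d \<in> diagrams n \<Longrightarrow> i \<in> nodes n \<Longrightarrow> isolate i d \<in> diagrams n"
  unfolding diagrams_iff by (rule partition_on_isolate)

lemma stack_isolate: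
  assumes "{} \<notin> d1" and "i > 0"
  shows "stack d1 (isolate i d2) = isolate (i, 2) (stack d1 d2)"
proof -
  note v2 = vertex2_pos[OF \<open>i > 0\<close>]
  have tag1_keep: "tag1 B - {(i, 2)} = tag1 B" for B
    unfolding tag1_eq_image vertex1_def by auto
  have tag2_remove: "tag2 (B - {i}) = tag2 B - {(i, 2)}" for B
    unfolding tag2_eq_image image_set_diff[OF inj_vertex2] by (simp add: v2)
  have "inj tag2"
    unfolding tag2_eq_image[abs_def] by (rule injI) (simp add: inj_image_eq_iff[OF inj_vertex2])
  then have "tag2 ` ((\<lambda>C. C - {i}) ` d2 - {{}}) = (\<lambda>C. tag2 C - {(i, 2)}) ` d2 - {{}}"
    by (simp add: image_set_diff image_image tag2_remove) (simp add: tag2_eq_image)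
  moreover have "{} \<notin> tag1 ` d1" using assms(1) by (auto simp: tag1_eq_image)
  ultimately show ?thesis
    unfolding stack_def isolate_def
    by (auto simp: tag1_keep image_Un image_image v2 tag2_eq_image[of "{i}"])
qed

lemma block_of_right_vertex:
  assumes d2: "partition_on A d2" and B: "B \<in> d2" "i \<in> B" and "i > 0"
    and X: "X \<in> stack d1 d2" "(i, 2) \<in> X"
  shows "X = tag2 B"
proof -
  have "(i, 2) \<notin> tag1 C" for C
    unfolding tag1_eq_image vertex1_def by auto
  with X obtain C where C: "C \<in> d2" "X = tag2 C" unfolding stack_def by blast
  with X(2) have "vertex2 i \<in> vertex2 ` C"
    using \<open>i > 0\<close> by (simp add: tag2_eq_image vertex2_pos)
  then have "i \<in> C" using inj_vertex2 by (simp add: inj_image_mem_iff)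
  then show ?thesis using partition_on_eq_if_common[OF d2 C(1) B(1) _ B(2)] C(2) by simp
qed

lemma components_stack_isolate:
  assumes d1: "d1 \<in> diagrams n" and d2: "d2 \<in> diagrams n" and i: "i \<in> nodes n" "i > 0"
  shows "components (stack d1 (isolate i d2)) = isolate (i, 2) (components (stack d1 d2))"
proof -
  obtain B where B: "B \<in> d2" "i \<in> B"
    using d2 i by (auto simp: diagrams_iff partition_on_def)
  have "{} \<notin> d1" using d1 by (simp add: diagrams_iff partition_on_def)
  then have "stack d1 (isolate i d2) = isolate (i, 2) (stack d1 d2)"
    using i(2) by (rule stack_isolate)
  also have "components \<dots> = isolate (i, 2) (components (stack d1 d2))"
  proof (rule components_isolate)
    show "tag2 B \<in> stack d1 d2" "(i, 2) \<in> tag2 B"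
      using B i(2) by (auto simp: stack_def tag2_eq_image vertex2_pos[symmetric])
    show "B' = tag2 B" if "B' \<in> stack d1 d2" "(i, 2) \<in> B'" for B'
      using d2 B i(2) that unfolding diagrams_iff by (rule block_of_right_vertex)
  qed
  finally show ?thesis .
qed

lemma compose_isolate:
  assumes "d1 \<in> diagrams n" "d2 \<in> diagrams n" "i \<in> nodes n" "i > 0"
  shows "compose d1 (isolate i d2) = isolate i (compose d1 d2)"
proof -
  have "(i, 2) \<in> \<Union>(components (stack d1 d2))"
    using assms by (auto simp: Union_stack diagrams_iff partition_on_def vertex2_pos[symmetric])
  with inj_on_fst_outer_stack[of d1 d2] show ?thesis
    by (simp add: compose_eq_outer_blocks components_stack_isolate[OF assms] outer_blocks_isolate
        outer_def)
qed

lemma singleton_in_compose: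
  assumes "d1 \<in> diagrams n" "d2 \<in> diagrams n" "i \<in> nodes n" "i > 0" and "{i} \<in> d2"
  shows "{i} \<in> compose d1 d2"
proof -
  have "isolate i d2 = d2"
    using assms(2,5) unfolding diagrams_iff by (rule isolate_eq_self)
  then have "compose d1 d2 = isolate i (compose d1 d2)"
    using compose_isolate[OF assms(1-4)] by simp
  then show ?thesis by (metis singleton_in_isolate)
qed

lemma nmid_isolate:
  assumes d1: "d1 \<in> diagrams n" and d2: "d2 \<in> diagrams n" and i: "i \<in> nodes n" "i > 0"
    and not_singleton: "{i} \<notin> d2"
  shows "nmid d1 (isolate i d2) = nmid d1 d2 + (if {i} \<in> compose d1 d2 then 1 else 0)"
proof -
  let ?S = "stack d1 d2"
  let ?K = "(same_block ?S)\<^sup>* `` {(i, 2)}"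
  obtain B where B: "B \<in> d2" "i \<in> B"
    using d2 i by (auto simp: diagrams_iff partition_on_def)
  moreover have "B \<noteq> {i}" using B(1) not_singleton by blast
  ultimately obtain j where j: "j \<in> B" "j \<noteq> i" by blast
  have B_S: "tag2 B \<in> ?S" "(i, 2) \<in> tag2 B" "vertex2 j \<in> tag2 B"
    using B j i(2) by (auto simp: stack_def tag2_eq_image vertex2_pos[symmetric])
  then have "((i, 2), vertex2 j) \<in> same_block ?S" by (rule same_blockI)
  then have "vertex2 j \<in> ?K" by auto
  moreover have "vertex2 j \<noteq> (i, 2)"
    using j(2) i(2) inj_vertex2 by (metis injD vertex2_pos)
  moreover have "?K \<in> components ?S" using B_S by (intro Image_in_components) blast
  ultimately have K: "?K \<in> components ?S" "(i, 2) \<in> ?K" "?K \<noteq> {(i, 2)}"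
    by auto
  have "finite (\<Union>?S)"
    using d1 d2 by (simp add: Union_stack diagrams_iff partition_on_def nodes_def)
  then have "finite (components ?S)"
    by (rule finite_elements[OF _ partition_on_components])
  have "nmid d1 (isolate i d2) = card (middle_components (isolate (i, 2) (components ?S)))"
    by (simp only: nmid_eq_card_middle_components components_stack_isolate[OF d1 d2 i])
  also have "\<dots> = card (middle_components (components ?S)) +
      (if {fst (i, 2::nat)} \<in> outer_blocks (components ?S) then 1 else 0)"
    using card_middle_components_isolate[OF \<open>finite (components ?S)\<close> partition_on_components
        inj_on_fst_outer_stack K]
    by (simp add: outer_def)
  finally show ?thesis
    by (simp only: nmid_eq_card_middle_components compose_eq_outer_blocks fst_conv)
qed

lemma right_block_in_compose:
  assumes B: "B \<in> d2" "z1 \<in> B" "z2 \<in> B" and "z1 > 0" "z2 > 0"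
  shows "\<exists>E\<in>compose d1 d2. z1 \<in> E \<and> z2 \<in> E"
proof -
  let ?S = "stack d1 d2"
  let ?K = "(same_block ?S)\<^sup>* `` {(z1, 2)}"
  let ?E = "fst ` (?K \<inter> Collect outer)"
  have B_S: "tag2 B \<in> ?S" "(z1, 2) \<in> tag2 B" "(z2, 2) \<in> tag2 B"
    using assms by (auto simp: stack_def tag2_eq_image vertex2_pos[symmetric])
  then have "((z1, 2), (z2, 2)) \<in> same_block ?S" by (rule same_blockI)
  then have K: "?K \<in> components ?S" "(z1, 2) \<in> ?K" "(z2, 2) \<in> ?K"
    using B_S by (auto intro: Image_in_components)
  have outer: "outer (z1, 2)" "outer (z2, 2)" by (simp_all add: outer_def)
  have "?E \<in> compose d1 d2"
    unfolding compose_eq_outer_blocks using K(1,2) outer(1) by (rule outer_blocksI)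
  moreover have "(z1, 2) \<in> ?K \<inter> Collect outer" "(z2, 2) \<in> ?K \<inter> Collect outer"
    using K outer by simp_all
  then have "z1 \<in> ?E" "z2 \<in> ?E" by (metis fst_conv image_eqI)+
  ultimately show ?thesis by (intro bexI) simp_all
qed

section \<open>Pushforwards and the multiplication of \<open>P\<^sub>n\<close>\<close>

definition pushforward :: "'a set \<Rightarrow> ('a \<Rightarrow> 'b) \<Rightarrow> ('a \<Rightarrow> 'c::comm_monoid_add) \<Rightarrow> 'b \<Rightarrow> 'c" where
  "pushforward D f w e = (\<Sum>d\<in>D. if f d = e then w d else 0)"

lemma pushforward_cong:
  "(\<And>d. d \<in> D \<Longrightarrow> f d = g d) \<Longrightarrow> (\<And>d. d \<in> D \<Longrightarrow> v d = w d) \<Longrightarrow>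
     pushforward D f v e = pushforward D g w e"
  unfolding pushforward_def by (rule sum.cong) simp_all

lemma pushforward_add:
  "pushforward D f (\<lambda>d. v d + w d) e = pushforward D f v e + pushforward D f w e"
  unfolding pushforward_def sum.distrib[symmetric] by (rule sum.cong) simp_all

lemma pushforward_scale:
  "pushforward D f (\<lambda>d. r * w d) e = r * (pushforward D f w e :: 'c::semiring_0)"
  unfolding pushforward_def sum_distrib_left by (rule sum.cong) simp_all

lemma pushforward_sum:
  "pushforward D f (\<lambda>d. \<Sum>i\<in>I. w i d) e = (\<Sum>i\<in>I. pushforward D f (w i) e)"
proof -
  have "(if f d = e then \<Sum>i\<in>I. w i d else 0) = (\<Sum>i\<in>I. if f d = e then w i d else 0)" for d
    by simp
  then show ?thesis unfolding pushforward_def by (simp add: sum.swap[of _ I])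
qed

lemma pushforward_nonzeroE:
  assumes "pushforward D f w e \<noteq> 0"
  obtains d where "d \<in> D" "f d = e" "w d \<noteq> 0"
  using assms unfolding pushforward_def
  by (auto elim!: sum.not_neutral_contains_not_neutral split: if_splits)

lemma pushforward_eq_self:
  assumes "finite D" and "\<And>d. w d \<noteq> 0 \<Longrightarrow> d \<in> D \<and> f d = d"
  shows "pushforward D f w e = w e"
proof -
  have "pushforward D f w e = (\<Sum>d\<in>D. if d = e then w d else 0)"
    unfolding pushforward_def
  proof (rule sum.cong[OF refl])
    fix d
    show "(if f d = e then w d else 0) = (if d = e then w d else 0)"
      using assms(2)[of d] by (cases "w d = 0") auto
  qed
  also have "\<dots> = w e" using assms by (cases "e \<in> D") (auto simp: sum.delta')
  finally show ?thesis .
qed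

lemma pushforward_comp:
  fixes c :: "'b \<Rightarrow> 'c::semiring_0"
  assumes "finite D'" and "f ` D \<subseteq> D'"
  shows "pushforward D' g (\<lambda>d'. c d' * pushforward D f w d') e =
           pushforward D (\<lambda>d. g (f d)) (\<lambda>d. c (f d) * w d) e"
proof -
  have "pushforward D' g (\<lambda>d'. c d' * pushforward D f w d') e =
      (\<Sum>d'\<in>D'. \<Sum>d\<in>D. if f d = d' then (if g d' = e then c d' * w d else 0) else 0)"
    unfolding pushforward_def sum_distrib_left
    by (intro sum.cong refl) (auto intro!: sum.neutral sum.cong)
  also have "\<dots> = (\<Sum>d\<in>D. if g (f d) = e then c (f d) * w d else 0)"
    using assms by (subst sum.swap) (auto simp: sum.delta intro!: sum.cong)
  finally show ?thesis unfolding pushforward_def .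
qed

lemma Pn_iff: "f \<in> Pn n \<longleftrightarrow> (\<forall>d. f d \<noteq> 0 \<longrightarrow> d \<in> diagrams n)"
  unfolding Pn_def by auto

lemma span_diag_iff: "f \<in> span_diag n P \<longleftrightarrow> (\<forall>d. f d \<noteq> 0 \<longrightarrow> d \<in> diagrams n \<and> P d)"
  unfolding span_diag_def Pn_def by auto

lemma pmult_eq_sum_pushforward:
  "pmult \<delta> n p v e = (\<Sum>d1\<in>diagrams n.
      pushforward (diagrams n) (compose d1) (\<lambda>d2. p d1 * v d2 * \<delta> ^ nmid d1 d2) e)"
proof -
  let ?D = "diagrams n"
  have "pmult \<delta> n p v e = (\<Sum>(d1, d2)\<in>{q \<in> ?D \<times> ?D. compose (fst q) (snd q) = e}.
      p d1 * v d2 * \<delta> ^ nmid d1 d2)"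
    unfolding pmult_def by (rule sum.cong) auto
  also have "\<dots> = (\<Sum>(d1, d2)\<in>?D \<times> ?D. if compose d1 d2 = e then p d1 * v d2 * \<delta> ^ nmid d1 d2 else 0)"
    using finite_diagrams by (simp add: sum.inter_filter case_prod_beta)
  finally show ?thesis
    unfolding pushforward_def sum.cartesian_product .
qed

lemma pmult_nonzeroE:
  assumes "pmult \<delta> n p v e \<noteq> 0"
  obtains d1 d2 where "d1 \<in> diagrams n" "d2 \<in> diagrams n" "compose d1 d2 = e" "v d2 \<noteq> 0"
proof -
  from assms obtain d1 where d1: "d1 \<in> diagrams n" and nonzero:
    "pushforward (diagrams n) (compose d1) (\<lambda>d2. p d1 * v d2 * \<delta> ^ nmid d1 d2) e \<noteq> 0"
    unfolding pmult_eq_sum_pushforward by (rule sum.not_neutral_contains_not_neutral)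
  from nonzero obtain d2
    where "d2 \<in> diagrams n" "compose d1 d2 = e" "p d1 * v d2 * \<delta> ^ nmid d1 d2 \<noteq> 0"
    by (rule pushforward_nonzeroE)
  with d1 show ?thesis using that by fastforce
qed

lemma pmult_in_Pn: "pmult \<delta> n p v \<in> Pn n"
  unfolding Pn_iff by (auto elim: pmult_nonzeroE intro: compose_in_diagrams)

section \<open>Direct summands from projections\<close>

definition left_ideal :: "'r::comm_ring_1 \<Rightarrow> nat \<Rightarrow> (int set set \<Rightarrow> 'r) set \<Rightarrow> bool" where
  "left_ideal \<delta> n J \<longleftrightarrow> J \<subseteq> Pn n \<and> (\<lambda>_. 0) \<in> J \<and>
     (\<forall>f\<in>J. \<forall>g\<in>J. (\<lambda>d. f d + g d) \<in> J) \<and> (\<forall>r. \<forall>f\<in>J. (\<lambda>d. r * f d) \<in> J) \<and>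
     (\<forall>p\<in>Pn n. \<forall>f\<in>J. pmult \<delta> n p f \<in> J)"

lemma left_ideal_span_diag:
  assumes "\<And>d1 d2. d1 \<in> diagrams n \<Longrightarrow> d2 \<in> diagrams n \<Longrightarrow> P d2 \<Longrightarrow> P (compose d1 d2)"
  shows "left_ideal \<delta> n (span_diag n P)"
  unfolding left_ideal_def
proof (intro conjI ballI allI)
  show "span_diag n P \<subseteq> Pn n"
    unfolding span_diag_def by blast
  show "(\<lambda>_. 0) \<in> span_diag n P"
    by (simp add: span_diag_iff)
  show "(\<lambda>d. f d + g d) \<in> span_diag n P" if "f \<in> span_diag n P" "g \<in> span_diag n P" for f g
    using that unfolding span_diag_iff by (metis add.right_neutral add_0)
  show "(\<lambda>d. r * f d) \<in> span_diag n P" if "f \<in> span_diag n P" for r f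
    using that unfolding span_diag_iff by (metis mult_zero_right)
  show "pmult \<delta> n p f \<in> span_diag n P" if f: "f \<in> span_diag n P" for p f
    unfolding span_diag_iff
  proof (intro allI impI)
    fix e assume "pmult \<delta> n p f e \<noteq> 0"
    then obtain d1 d2 where "d1 \<in> diagrams n" "d2 \<in> diagrams n" "compose d1 d2 = e" "f d2 \<noteq> 0"
      by (rule pmult_nonzeroE)
    with f assms show "e \<in> diagrams n \<and> P e"
      unfolding span_diag_iff by (metis compose_in_diagrams)
  qed
qed

lemma
  assumes "left_ideal \<delta> n J"
  shows left_ideal_zero: "(\<lambda>_. 0) \<in> J"
    and left_ideal_add: "f \<in> J \<Longrightarrow> g \<in> J \<Longrightarrow> (\<lambda>d. f d + g d) \<in> J"
    and left_ideal_scale: "f \<in> J \<Longrightarrow> (\<lambda>d. r * f d) \<in> J"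
    and left_ideal_pmult: "p \<in> Pn n \<Longrightarrow> f \<in> J \<Longrightarrow> pmult \<delta> n p f \<in> J"
  using assms unfolding left_ideal_def by blast+

lemma span_diag_True: "span_diag n (\<lambda>_. True) = Pn n"
  unfolding span_diag_def by simp

lemma left_ideal_Pn: "left_ideal \<delta> n (Pn n)"
  using left_ideal_span_diag[of n "\<lambda>_. True"] by (simp add: span_diag_True)

lemma left_ideal_diff:
  assumes "left_ideal \<delta> n J" "f \<in> J" "g \<in> J"
  shows "(\<lambda>d. f d - g d) \<in> J"
  using left_ideal_add[OF assms(1,2) left_ideal_scale[OF assms(1,3), of "- 1"]] by simp

lemma coset_eq_iff:
  assumes J: "left_ideal \<delta> n J"
  shows "coset J v = coset J w \<longleftrightarrow> (\<lambda>d. v d - w d) \<in> J"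
proof
  assume "coset J v = coset J w"
  moreover have "v \<in> coset J v"
    unfolding coset_def using left_ideal_zero[OF J] by (intro CollectI bexI[of _ "\<lambda>_. 0"]) simp_all
  ultimately obtain j where "j \<in> J" "v = (\<lambda>d. w d + j d)"
    unfolding coset_def by blast
  then show "(\<lambda>d. v d - w d) \<in> J" by simp
next
  have shift: "coset J v \<subseteq> coset J w" if "(\<lambda>d. v d - w d) \<in> J" for v w
  proof
    fix y assume "y \<in> coset J v"
    then obtain j where "j \<in> J" "y = (\<lambda>d. v d + j d)" unfolding coset_def by blast
    moreover have "(\<lambda>d. (v d - w d) + j d) \<in> J"
      using left_ideal_add[OF J that \<open>j \<in> J\<close>] .
    ultimately show "y \<in> coset J w"
      unfolding coset_def by (intro CollectI bexI[of _ "\<lambda>d. (v d - w d) + j d"]) auto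
  qed
  assume "(\<lambda>d. v d - w d) \<in> J"
  moreover have "(\<lambda>d. 0 - (v d - w d)) \<in> J"
    using left_ideal_diff[OF J left_ideal_zero[OF J] \<open>(\<lambda>d. v d - w d) \<in> J\<close>] .
  ultimately show "coset J v = coset J w" using shift[of v w] shift[of w v] by simp
qed

definition Pn_module_endo ::
    "'r::comm_ring_1 \<Rightarrow> nat \<Rightarrow> ((int set set \<Rightarrow> 'r) \<Rightarrow> (int set set \<Rightarrow> 'r)) \<Rightarrow> bool" where
  "Pn_module_endo \<delta> n T \<longleftrightarrow>
     (\<forall>v w. T (\<lambda>d. v d + w d) = (\<lambda>d. T v d + T w d)) \<and>
     (\<forall>r v. T (\<lambda>d. r * v d) = (\<lambda>d. r * T v d)) \<and>
     (\<forall>p v. T (pmult \<delta> n p v) = pmult \<delta> n p (T v))"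

lemma
  assumes "Pn_module_endo \<delta> n T"
  shows Pn_module_endo_add: "T (\<lambda>d. v d + w d) = (\<lambda>d. T v d + T w d)"
    and Pn_module_endo_scale: "T (\<lambda>d. r * v d) = (\<lambda>d. r * T v d)"
    and Pn_module_endo_pmult: "T (pmult \<delta> n p v) = pmult \<delta> n p (T v)"
  using assms unfolding Pn_module_endo_def by blast+

lemma Pn_module_endo_zero: "Pn_module_endo \<delta> n T \<Longrightarrow> T (\<lambda>_. 0) = (\<lambda>_. 0)"
  using Pn_module_endo_scale[of \<delta> n T 0 "\<lambda>_. 0"] by simp

lemma Pn_module_endo_diff:
  assumes "Pn_module_endo \<delta> n T"
  shows "T (\<lambda>d. v d - w d) = (\<lambda>d. T v d - T w d)"
  using Pn_module_endo_add[OF assms, of v "\<lambda>d. - 1 * w d"] Pn_module_endo_scale[OF assms, of "- 1" w]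
  by simp

definition quot_kernel ::
    "nat \<Rightarrow> (int set set \<Rightarrow> 'r::comm_ring_1) set \<Rightarrow> ((int set set \<Rightarrow> 'r) \<Rightarrow> (int set set \<Rightarrow> 'r))
      \<Rightarrow> (int set set \<Rightarrow> 'r) set set" where
  "quot_kernel n J T = {coset J w | w. w \<in> Pn n \<and> T w \<in> J}"

lemma coset_in_quot_kernel_iff:
  assumes J: "left_ideal \<delta> n J" and T: "Pn_module_endo \<delta> n T"
    and T_J: "T ` J \<subseteq> J" and "v \<in> Pn n"
  shows "coset J v \<in> quot_kernel n J T \<longleftrightarrow> T v \<in> J"
proof
  assume "coset J v \<in> quot_kernel n J T"
  then obtain w where "coset J v = coset J w" "T w \<in> J"
    unfolding quot_kernel_def by blast
  then have "T (\<lambda>d. v d - w d) \<in> J" using T_J by (auto simp: coset_eq_iff[OF J])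
  then have "(\<lambda>d. T v d - T w d) \<in> J" by (simp add: Pn_module_endo_diff[OF T])
  from left_ideal_add[OF J this \<open>T w \<in> J\<close>] show "T v \<in> J" by simp
qed (use \<open>v \<in> Pn n\<close> in \<open>auto simp: quot_kernel_def\<close>)

lemma quot_submodule_quot_kernel:
  fixes \<delta> :: "'r::comm_ring_1"
  assumes ideal: "left_ideal \<delta> n J" and endo: "Pn_module_endo \<delta> n T"
    and maps_J: "T ` J \<subseteq> J"
  shows "quot_submodule \<delta> n J (quot_kernel n J T)"
  unfolding quot_submodule_def
proof (intro conjI ballI allI impI)
  note kernel_iff = coset_in_quot_kernel_iff[OF ideal endo maps_J]
  note Pn = left_ideal_Pn[of \<delta> n]
  show "quot_kernel n J T \<subseteq> coset J ` Pn n"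
    unfolding quot_kernel_def by blast
  show "coset J (\<lambda>_. 0) \<in> quot_kernel n J T"
    using kernel_iff[OF left_ideal_zero[OF Pn]] left_ideal_zero[OF ideal]
    by (simp add: Pn_module_endo_zero[OF endo])
  fix u v :: "int set set \<Rightarrow> 'r" assume u: "u \<in> Pn n" and v: "v \<in> Pn n"
  {
    assume "coset J u \<in> quot_kernel n J T" "coset J v \<in> quot_kernel n J T"
    then show "coset J (\<lambda>d. u d + v d) \<in> quot_kernel n J T"
      using left_ideal_add[OF ideal] left_ideal_add[OF Pn u v]
      by (simp add: kernel_iff u v Pn_module_endo_add[OF endo])
  }
  assume "coset J v \<in> quot_kernel n J T"
  then show "coset J (\<lambda>d. r * v d) \<in> quot_kernel n J T" for r
    using left_ideal_scale[OF ideal] left_ideal_scale[OF Pn v]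
    by (simp add: kernel_iff v Pn_module_endo_scale[OF endo])
  from \<open>coset J v \<in> quot_kernel n J T\<close> show "coset J (pmult \<delta> n u v) \<in> quot_kernel n J T"
    using left_ideal_pmult[OF ideal u]
    by (simp add: kernel_iff[OF pmult_in_Pn] kernel_iff[OF v] Pn_module_endo_pmult[OF endo])
qed

lemma coset_image_Int_quot_kernel:
  fixes \<delta> :: "'r::comm_ring_1"
  assumes ideal: "left_ideal \<delta> n J" and endo: "Pn_module_endo \<delta> n T" and maps_J: "T ` J \<subseteq> J"
    and A: "A \<subseteq> Pn n" and onto_A: "range T \<subseteq> A" and fixes_A: "\<And>a. a \<in> A \<Longrightarrow> T a = a"
  shows "coset J ` A \<inter> quot_kernel n J T = {coset J (\<lambda>_. 0)}"
proof
  note kernel_iff = coset_in_quot_kernel_iff[OF ideal endo maps_J]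
  show "coset J ` A \<inter> quot_kernel n J T \<subseteq> {coset J (\<lambda>_. 0)}"
  proof
    fix Y assume "Y \<in> coset J ` A \<inter> quot_kernel n J T"
    then obtain a where a: "a \<in> A" "Y = coset J a" "coset J a \<in> quot_kernel n J T" by blast
    then have "a \<in> J" using kernel_iff A fixes_A by auto
    with a(2) show "Y \<in> {coset J (\<lambda>_. 0)}" by (simp add: coset_eq_iff[OF ideal])
  qed
  have T_zero: "T (\<lambda>_. 0) = (\<lambda>_. 0)" by (rule Pn_module_endo_zero[OF endo])
  moreover from this have "(\<lambda>_. 0) \<in> A" using onto_A by (metis rangeI subsetD)
  ultimately show "{coset J (\<lambda>_. 0)} \<subseteq> coset J ` A \<inter> quot_kernel n J T"
    by (simp add: kernel_iff left_ideal_zero[OF left_ideal_Pn] left_ideal_zero[OF ideal])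
qed

lemma direct_summand_quot_if_projection:
  fixes \<delta> :: "'r::comm_ring_1"
  assumes ideal: "left_ideal \<delta> n J" and endo: "Pn_module_endo \<delta> n T" and maps_J: "T ` J \<subseteq> J"
    and A: "A \<subseteq> Pn n" and onto_A: "range T \<subseteq> A" and fixes_A: "\<And>a. a \<in> A \<Longrightarrow> T a = a"
  shows "direct_summand_quot \<delta> n J (coset J ` A)"
  unfolding direct_summand_quot_def
proof (intro exI conjI)
  let ?K = "quot_kernel n J T"
  show "quot_submodule \<delta> n J ?K"
    by (rule quot_submodule_quot_kernel[OF ideal endo maps_J])
  show "coset J ` A \<inter> ?K = {coset J (\<lambda>_. 0)}"
    using ideal endo maps_J A onto_A fixes_A by (rule coset_image_Int_quot_kernel)
  show "\<forall>v\<in>Pn n. \<exists>a\<in>Pn n. \<exists>c\<in>Pn n. coset J a \<in> coset J ` A \<and> coset J c \<in> ?K \<and>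
      coset J v = coset J (\<lambda>d. a d + c d)"
  proof
    fix v :: "int set set \<Rightarrow> 'r" assume v: "v \<in> Pn n"
    have "T v \<in> A" using onto_A by blast
    moreover have "(\<lambda>d. v d - T v d) \<in> Pn n"
      using left_ideal_diff[OF left_ideal_Pn v] A \<open>T v \<in> A\<close> by blast
    moreover have "T (\<lambda>d. v d - T v d) = (\<lambda>_. 0)"
      using fixes_A[OF \<open>T v \<in> A\<close>] by (simp add: Pn_module_endo_diff[OF endo])
    ultimately show "\<exists>a\<in>Pn n. \<exists>c\<in>Pn n. coset J a \<in> coset J ` A \<and> coset J c \<in> ?K \<and>
        coset J v = coset J (\<lambda>d. a d + c d)"
      using A by (intro bexI[of _ "T v"] bexI[of _ "\<lambda>d. v d - T v d"])
        (auto simp: coset_in_quot_kernel_iff[OF ideal endo maps_J] left_ideal_zero[OF ideal])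
  qed
qed

section \<open>The projection onto \<open>A\<^sub>x\<close>\<close>

lemma int_in_nodes: "z \<in> {1..n} \<Longrightarrow> int z \<in> nodes n"
  unfolding nodes_def by auto

definition J_diagram :: "nat set \<Rightarrow> int set set \<Rightarrow> bool" where
  "J_diagram Z d \<longleftrightarrow> (\<exists>B\<in>d. (\<exists>z\<in>Z. B = {int z}) \<or>
     (\<exists>z1\<in>Z. \<exists>z2\<in>Z. z1 \<noteq> z2 \<and> int z1 \<in> B \<and> int z2 \<in> B))"

lemma J_ideal_eq_span_diag: "J_ideal n Z = span_diag n (J_diagram Z)"
  unfolding J_ideal_def J_diagram_def ..

lemma J_diagram_compose:
  assumes Z: "Z \<subseteq> {1..n}" and d: "d1 \<in> diagrams n" "d2 \<in> diagrams n" and "J_diagram Z d2"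
  shows "J_diagram Z (compose d1 d2)"
proof -
  obtain B where B: "B \<in> d2"
    and "(\<exists>z\<in>Z. B = {int z}) \<or> (\<exists>z1\<in>Z. \<exists>z2\<in>Z. z1 \<noteq> z2 \<and> int z1 \<in> B \<and> int z2 \<in> B)"
    using \<open>J_diagram Z d2\<close> unfolding J_diagram_def by blast
  then consider z where "z \<in> Z" "B = {int z}"
    | z1 z2 where "z1 \<in> Z" "z2 \<in> Z" "z1 \<noteq> z2" "int z1 \<in> B" "int z2 \<in> B"
    by blast
  then show ?thesis
  proof cases
    case 1
    with Z have "z \<in> {1..n}" by blast
    then have "int z \<in> nodes n" "int z > 0" by (simp_all add: int_in_nodes)
    with 1 B d have "{int z} \<in> compose d1 d2" by (auto intro: singleton_in_compose)
    with 1 show ?thesis unfolding J_diagram_def by (intro bexI[of _ "{int z}"]) auto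
  next
    case 2
    with Z have "int z1 > 0" "int z2 > 0" by auto
    with 2 B obtain E where "E \<in> compose d1 d2" "int z1 \<in> E" "int z2 \<in> E"
      using right_block_in_compose[OF B 2(4,5)] by blast
    with 2 show ?thesis unfolding J_diagram_def by (intro bexI[of _ E]) auto
  qed
qed

lemma J_diagram_isolate:
  assumes "x \<notin> Z" and "J_diagram Z d"
  shows "J_diagram Z (isolate (int x) d)"
proof -
  obtain B where B: "B \<in> d"
    and "(\<exists>z\<in>Z. B = {int z}) \<or> (\<exists>z1\<in>Z. \<exists>z2\<in>Z. z1 \<noteq> z2 \<and> int z1 \<in> B \<and> int z2 \<in> B)"
    using \<open>J_diagram Z d\<close> unfolding J_diagram_def by blast
  then consider z where "z \<in> Z" "B = {int z}"
    | z1 z2 where "z1 \<in> Z" "z2 \<in> Z" "z1 \<noteq> z2" "int z1 \<in> B" "int z2 \<in> B"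
    by blast
  then show ?thesis
  proof cases
    case 1
    with \<open>x \<notin> Z\<close> have "B - {int x} = {int z}" by auto
    with B have "{int z} \<in> isolate (int x) d" using Diff_in_isolate[of B d "int x"] by simp
    with 1 show ?thesis unfolding J_diagram_def by (intro bexI[of _ "{int z}"]) auto
  next
    case 2
    with \<open>x \<notin> Z\<close> have "int z1 \<in> B - {int x}" "int z2 \<in> B - {int x}" by auto
    moreover from this B have "B - {int x} \<in> isolate (int x) d" by (intro Diff_in_isolate) auto
    ultimately show ?thesis
      using 2 unfolding J_diagram_def by (intro bexI[of _ "B - {int x}"]) auto
  qed
qed

lemma left_ideal_J_ideal: "Z \<subseteq> {1..n} \<Longrightarrow> left_ideal \<delta> n (J_ideal n Z)"
  unfolding J_ideal_eq_span_diag by (rule left_ideal_span_diag) (rule J_diagram_compose)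

definition isolate_coeff :: "'r::comm_ring_1 \<Rightarrow> nat \<Rightarrow> int set set \<Rightarrow> 'r" where
  "isolate_coeff u x d = (if {int x} \<in> d then 1 else u)"

definition A_proj :: "'r::comm_ring_1 \<Rightarrow> nat \<Rightarrow> nat \<Rightarrow> (int set set \<Rightarrow> 'r) \<Rightarrow> int set set \<Rightarrow> 'r" where
  "A_proj u n x v = pushforward (diagrams n) (isolate (int x)) (\<lambda>d. isolate_coeff u x d * v d)"

lemma A_proj_in_A_mod:
  assumes "x \<in> {1..n}"
  shows "A_proj u n x v \<in> A_mod n x"
  unfolding A_mod_def span_diag_iff
proof (intro allI impI)
  fix e assume "A_proj u n x v e \<noteq> 0"
  then obtain d where "d \<in> diagrams n" "isolate (int x) d = e"
    unfolding A_proj_def by (rule pushforward_nonzeroE)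
  then show "e \<in> diagrams n \<and> {int x} \<in> e"
    using isolate_in_diagrams[OF _ int_in_nodes[OF assms]] by auto
qed

lemma A_proj_eq_self:
  assumes "a \<in> A_mod n x"
  shows "A_proj u n x a = a"
proof
  fix e
  have support: "d \<in> diagrams n \<and> isolate (int x) d = d"
    if "isolate_coeff u x d * a d \<noteq> 0" for d
  proof -
    from that have "a d \<noteq> 0" by auto
    with assms have "partition_on (nodes n) d" "{int x} \<in> d"
      unfolding A_mod_def span_diag_iff diagrams_iff by auto
    then show ?thesis by (simp add: diagrams_iff isolate_eq_self)
  qed
  have "A_proj u n x a e = isolate_coeff u x e * a e"
    unfolding A_proj_def by (rule pushforward_eq_self[OF finite_diagrams]) (erule support)
  with assms show "A_proj u n x a e = a e"
    unfolding A_mod_def span_diag_iff isolate_coeff_def by (cases "a e = 0") auto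
qed

lemma A_proj_J_ideal:
  assumes "x \<in> {1..n}" "x \<notin> Z"
  shows "A_proj u n x ` J_ideal n Z \<subseteq> J_ideal n Z"
proof (clarify, unfold J_ideal_eq_span_diag span_diag_iff, intro allI impI)
  fix v e assume v: "\<forall>d. v d \<noteq> 0 \<longrightarrow> d \<in> diagrams n \<and> J_diagram Z d"
    and nonzero: "A_proj u n x v e \<noteq> 0"
  from nonzero obtain d where d: "d \<in> diagrams n" "isolate (int x) d = e"
    and "isolate_coeff u x d * v d \<noteq> 0"
    unfolding A_proj_def by (rule pushforward_nonzeroE)
  then have "v d \<noteq> 0" by auto
  then have "J_diagram Z d" using v by blast
  then show "e \<in> diagrams n \<and> J_diagram Z e"
    using isolate_in_diagrams[OF d(1) int_in_nodes[OF assms(1)]] J_diagram_isolate[OF assms(2)]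
    unfolding d(2)[symmetric] by simp
qed

lemma isolate_coeff_compose:
  fixes \<delta> u :: "'r::comm_ring_1"
  assumes d: "d1 \<in> diagrams n" "d2 \<in> diagrams n" and x: "x \<in> {1..n}" and "\<delta> * u = 1"
  shows "isolate_coeff u x (compose d1 d2) * \<delta> ^ nmid d1 d2 =
           isolate_coeff u x d2 * \<delta> ^ nmid d1 (isolate (int x) d2)"
proof -
  have node: "int x \<in> nodes n" "int x > 0" using x by (simp_all add: int_in_nodes)
  show ?thesis
  proof (cases "{int x} \<in> d2")
    case True
    then have "isolate (int x) d2 = d2" "{int x} \<in> compose d1 d2"
      using d node by (simp_all add: isolate_eq_self diagrams_iff singleton_in_compose)
    with True show ?thesis by (simp add: isolate_coeff_def)
  next
    case False
    then have "nmid d1 (isolate (int x) d2) =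
        nmid d1 d2 + (if {int x} \<in> compose d1 d2 then 1 else 0)"
      using d node by (simp add: nmid_isolate)
    moreover have "u * (\<delta> * y) = y" for y
      using \<open>\<delta> * u = 1\<close> by (metis mult.assoc mult.commute mult_1)
    ultimately show ?thesis using False by (simp add: isolate_coeff_def)
  qed
qed

lemma A_proj_pmult:
  fixes \<delta> u :: "'r::comm_ring_1"
  assumes x: "x \<in> {1..n}" and "\<delta> * u = 1"
  shows "A_proj u n x (pmult \<delta> n p v) = pmult \<delta> n p (A_proj u n x v)"
proof
  fix e
  let ?D = "diagrams n" and ?iso = "isolate (int x)" and ?c = "isolate_coeff u x"
  let ?W = "\<lambda>d1 d2. p d1 * v d2 * \<delta> ^ nmid d1 d2"
  have iso_D: "?iso ` ?D \<subseteq> ?D" and comp_D: "compose d1 ` ?D \<subseteq> ?D" if "d1 \<in> ?D" for d1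
    using that by (auto intro: isolate_in_diagrams int_in_nodes[OF x] compose_in_diagrams)
  have "A_proj u n x (pmult \<delta> n p v) e =
      (\<Sum>d1\<in>?D. pushforward ?D ?iso (\<lambda>d. ?c d * pushforward ?D (compose d1) (?W d1) d) e)"
    unfolding A_proj_def pmult_eq_sum_pushforward by (simp add: sum_distrib_left pushforward_sum)
  also have "\<dots> = (\<Sum>d1\<in>?D. pushforward ?D (\<lambda>d2. ?iso (compose d1 d2))
      (\<lambda>d2. ?c (compose d1 d2) * ?W d1 d2) e)"
    by (intro sum.cong refl pushforward_comp finite_diagrams comp_D)
  also have "\<dots> = (\<Sum>d1\<in>?D. pushforward ?D (\<lambda>d2. compose d1 (?iso d2))
      (\<lambda>d2. (p d1 * \<delta> ^ nmid d1 (?iso d2)) * (?c d2 * v d2)) e)"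
  proof (intro sum.cong refl pushforward_cong)
    fix d1 d2 assume "d1 \<in> ?D" "d2 \<in> ?D"
    then show "?iso (compose d1 d2) = compose d1 (?iso d2)"
      using x by (simp add: compose_isolate int_in_nodes)
    show "?c (compose d1 d2) * ?W d1 d2 = (p d1 * \<delta> ^ nmid d1 (?iso d2)) * (?c d2 * v d2)"
      using isolate_coeff_compose[OF \<open>d1 \<in> ?D\<close> \<open>d2 \<in> ?D\<close> x \<open>\<delta> * u = 1\<close>]
      by (simp add: ac_simps)
  qed
  also have "\<dots> = (\<Sum>d1\<in>?D. pushforward ?D (compose d1)
      (\<lambda>d2. (p d1 * \<delta> ^ nmid d1 d2) * A_proj u n x v d2) e)"
    unfolding A_proj_def by (intro sum.cong refl pushforward_comp[symmetric] finite_diagrams iso_D)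
  also have "\<dots> = pmult \<delta> n p (A_proj u n x v) e"
    unfolding pmult_eq_sum_pushforward by (intro sum.cong refl pushforward_cong) (simp_all add: ac_simps)
  finally show "A_proj u n x (pmult \<delta> n p v) e = pmult \<delta> n p (A_proj u n x v) e" .
qed

lemma Pn_module_endo_A_proj:
  fixes \<delta> u :: "'r::comm_ring_1"
  assumes "x \<in> {1..n}" and "\<delta> * u = 1"
  shows "Pn_module_endo \<delta> n (A_proj u n x)"
  unfolding Pn_module_endo_def
proof (intro conjI allI ext)
  show "A_proj u n x (\<lambda>d. v d + w d) e = A_proj u n x v e + A_proj u n x w e" for v w e
    unfolding A_proj_def by (simp add: distrib_left pushforward_add)
  show "A_proj u n x (\<lambda>d. r * v d) e = r * A_proj u n x v e" for r v e
    unfolding A_proj_def pushforward_scale[symmetric] by (simp add: ac_simps)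
  show "A_proj u n x (pmult \<delta> n p v) e = pmult \<delta> n p (A_proj u n x v) e" for p v e
    by (simp add: A_proj_pmult[OF assms])
qed

lemma A_mod_subset_Pn: "A_mod n x \<subseteq> Pn n"
  unfolding A_mod_def span_diag_def by blast

theorem proposition4p7:
  fixes \<delta> :: "'r::comm_ring_1" and n x :: nat and X :: "nat set"
  assumes "X \<subseteq> {1..n}" and "x \<in> X" and "\<exists>u. \<delta> * u = 1"
  shows "direct_summand_quot \<delta> n (J_ideal n (X - {x}))
           (coset (J_ideal n (X - {x})) ` A_mod n x)"
proof -
  obtain u where u: "\<delta> * u = 1" using assms(3) by blast
  have x: "x \<in> {1..n}" and Z: "X - {x} \<subseteq> {1..n}" and "x \<notin> X - {x}"
    using assms(1,2) by auto
  show ?thesis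
  proof (rule direct_summand_quot_if_projection)
    show "left_ideal \<delta> n (J_ideal n (X - {x}))" using Z by (rule left_ideal_J_ideal)
    show "Pn_module_endo \<delta> n (A_proj u n x)" using x u by (rule Pn_module_endo_A_proj)
    show "A_proj u n x ` J_ideal n (X - {x}) \<subseteq> J_ideal n (X - {x})"
      using x \<open>x \<notin> X - {x}\<close> by (rule A_proj_J_ideal)
    show "range (A_proj u n x) \<subseteq> A_mod n x" using A_proj_in_A_mod[OF x] by blast
  qed (simp_all add: A_mod_subset_Pn A_proj_eq_self)
qed

end
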